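(* Let $\varepsilon>0$ and $m\ge 0$ be real numbers with $0\le m\varepsilon\le 1$. Then $$\lim_{\substack{t\to+\infty\\ t\in\varepsilon\mathbb{Z}}}\ \sum_{x\in\varepsilon\mathbb{Z}} a_1(x,t,m,\varepsilon)^2=\frac{m\varepsilon}{2\sqrt{1+m^2\varepsilon^2}}.$$
   Context: Fix $\varepsilon>0$ (lattice step) and $m\ge 0$ (mass). Consider the lattice $\varepsilon\mathbb{Z}^2=\{(x,t): x/\varepsilon,\ t/\varepsilon\in\mathbb{Z}\}$. A checker path on $\varepsilon\mathbb{Z}^2$ is a finite sequence of points of $\varepsilon\mathbb{Z}^2$ such that the vector from each point (except the last) to the next equals either $(\varepsilon,\varepsilon)$ or $(-\varepsilon,\varepsilon)$. A turn of a path is a point of the path (not the first and not the last) such that the vectors from it to the next point and to the previous point are orthogonal; $\mathrm{turns}(s)$ denotes the number of turns of $s$. For $(x,t)\in\varepsilon\mathbb{Z}^2$ with $t>0$ define $$a(x,t,m,\varepsilon):=(1+m^2\varepsilon^2)^{(1-t/\varepsilon)/2}\, i \sum_s(-im\varepsilon)^{\mathrm{turns}(s)},$$ the sum over all checker paths $s$ on $\varepsilon\mathbb{Z}^2$ from $(0,0)$ to $(x,t)$ whose first step goes to $(\varepsilon,\varepsilon)$ (an empty sum is $0$, and $(-im\varepsilon)^0=1$). Let $a_1(x,t,m,\varepsilon)$ denote the real part of $a(x,t,m,\varepsilon)$. *)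

theory Defs
  imports "HOL-Analysis.Analysis"
begin

definition lattice_pt :: "real \<Rightarrow> real \<times> real \<Rightarrow> bool" where
  "lattice_pt eps p \<longleftrightarrow> (\<exists>k l :: int. p = (of_int k * eps, of_int l * eps))"

definition checker_path :: "real \<Rightarrow> (real \<times> real) list \<Rightarrow> bool" where
  "checker_path eps s \<longleftrightarrow> s \<noteq> [] \<and> (\<forall>p \<in> set s. lattice_pt eps p) \<and>
     (\<forall>i. Suc i < length s \<longrightarrow>
        (s ! Suc i = (fst (s ! i) + eps, snd (s ! i) + eps) \<or>
         s ! Suc i = (fst (s ! i) - eps, snd (s ! i) + eps)))"

definition is_turn :: "(real \<times> real) list \<Rightarrow> nat \<Rightarrow> bool" where
  "is_turn s i \<longleftrightarrow> 0 < i \<and> Suc i < length s \<and>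
     (fst (s ! Suc i) - fst (s ! i)) * (fst (s ! (i - 1)) - fst (s ! i)) +
     (snd (s ! Suc i) - snd (s ! i)) * (snd (s ! (i - 1)) - snd (s ! i)) = 0"

definition turns :: "(real \<times> real) list \<Rightarrow> nat" where
  "turns s = card {i. is_turn s i}"

definition paths_to :: "real \<Rightarrow> real \<Rightarrow> real \<Rightarrow> (real \<times> real) list set" where
  "paths_to eps x t = {s. checker_path eps s \<and> 2 \<le> length s \<and> hd s = (0, 0) \<and>
      s ! 1 = (eps, eps) \<and> last s = (x, t)}"

definition a :: "real \<Rightarrow> real \<Rightarrow> real \<Rightarrow> real \<Rightarrow> complex" where
  "a x t m eps = complex_of_real ((1 + m\<^sup>2 * eps\<^sup>2) powr ((1 - t / eps) / 2)) * \<i> *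
     (\<Sum>s \<in> paths_to eps x t. (- \<i> * complex_of_real (m * eps)) ^ turns s)"

definition a1 :: "real \<Rightarrow> real \<Rightarrow> real \<Rightarrow> real \<Rightarrow> real" where
  "a1 x t m eps = Re (a x t m eps)"

end

(* Splitting the checker paths that end at (x, t + eps) according to their last step, a turn is
   added exactly when the direction changes.  Hence, with mu = m eps and up to the factor
   (1 + mu^2)^(n/2), the real part a1 at (k eps, (n + 1) eps) is a function amp1 n k which is even
   in k, vanishes for |k| > n and satisfies
     amp1 (n + 2) k = amp1 (n + 1) (k + 1) + amp1 (n + 1) (k - 1) - (1 + mu^2) amp1 n k.
   Its cosine transform  sum_k amp1 n k cos (k p)  therefore obeys a Chebyshev recursion; writing
   cos p = rho cos w with rho = sqrt (1 + mu^2), it equals  mu rho^(n - 1) sin (n w) / sin w.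
   By Parseval the normalised sum of squares is the mean over p of
     mu^2 sin^2 (n w) / (mu^2 + sin^2 p) = mu^2 (1 - cos (2 n w)) / (2 (mu^2 + sin^2 p)).
   The non-oscillating part has mean mu / (2 rho).  The oscillating part tends to 0: away from
   the zeros of sin p the phase w has non-vanishing derivative and one integrates by parts. *)

theory Submission
  imports Defs
begin

section \<open>Decomposing checker paths by their last step\<close>

lemma checker_path_step:
  assumes "checker_path eps s" "Suc i < length s"
  shows "snd (s ! Suc i) = snd (s ! i) + eps \<and> fst (s ! Suc i) - fst (s ! i) \<in> {eps, - eps}"
  using assms unfolding checker_path_def by fastforce

lemma checker_path_snd:
  assumes "checker_path eps s" "i < length s"
  shows "snd (s ! i) = snd (s ! 0) + real i * eps"
  using assms(2)
proof (induction i)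
  case (Suc i)
  then show ?case using checker_path_step[OF assms(1) Suc.prems] by (simp add: algebra_simps)
qed simp

lemma length_ge_2_rev_exhaust:
  assumes "2 \<le> length s"
  obtains r q p where "s = r @ [q, p]"
proof -
  obtain s' p where "s = s' @ [p]" using assms by (cases s rule: rev_cases) auto
  moreover obtain r q where "s' = r @ [q]" using assms \<open>s = s' @ [p]\<close> by (cases s' rule: rev_cases) auto
  ultimately show thesis using that by simp
qed

lemma checker_path_last_step:
  assumes "checker_path eps s" "2 \<le> length s"
  shows "snd (last s) = snd (last (butlast s)) + eps \<and> fst (last s) - fst (last (butlast s)) \<in> {eps, - eps}"
proof -
  obtain r q p where s: "s = r @ [q, p]" using length_ge_2_rev_exhaust[OF assms(2)] .
  have "s ! length r = q" "s ! Suc (length r) = p" unfolding s by (simp_all add: nth_append)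
  then show ?thesis using checker_path_step[OF assms(1), of "length r"] s by (simp add: butlast_append)
qed

lemma checker_path_prefix:
  assumes "checker_path eps (r @ q)" "r \<noteq> []"
  shows "checker_path eps r"
  unfolding checker_path_def
proof (intro conjI allI impI)
  fix i assume "Suc i < length r"
  then show "r ! Suc i = (fst (r ! i) + eps, snd (r ! i) + eps) \<or> r ! Suc i = (fst (r ! i) - eps, snd (r ! i) + eps)"
    using assms(1) unfolding checker_path_def by (auto simp: nth_append dest!: spec[of _ i])
qed (use assms in \<open>auto simp: checker_path_def\<close>)

lemma paths_to_length:
  assumes "s \<in> paths_to eps x t"
  shows "t = real (length s - 1) * eps"
proof -
  have s: "checker_path eps s" "2 \<le> length s" "hd s = (0, 0)" "last s = (x, t)"
    using assms unfolding paths_to_def by auto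
  then have "s ! 0 = (0, 0)" "s ! (length s - 1) = (x, t)"
    by (auto simp: hd_conv_nth last_conv_nth simp flip: length_greater_0_conv)
  then show ?thesis using checker_path_snd[OF s(1), of "length s - 1"] s(2) by simp
qed

lemma lattice_pt_step:
  assumes "lattice_pt eps (x, t)" "d \<in> {eps, - eps}"
  shows "lattice_pt eps (x + d, t + eps)"
proof -
  obtain k l :: int where "x = of_int k * eps" "t = of_int l * eps"
    using assms(1) unfolding lattice_pt_def by blast
  then have "(x + d, t + eps) = (of_int (if d = eps then k + 1 else k - 1) * eps, of_int (l + 1) * eps)"
    using assms(2) by (auto simp: algebra_simps)
  then show ?thesis unfolding lattice_pt_def by blast
qed

lemma paths_to_snoc:
  assumes "s \<in> paths_to eps x t" "d \<in> {eps, - eps}"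
  shows "s @ [(x + d, t + eps)] \<in> paths_to eps (x + d) (t + eps)"
proof -
  have s: "checker_path eps s" "2 \<le> length s" "hd s = (0, 0)" "s ! 1 = (eps, eps)" "last s = (x, t)"
    using assms(1) unfolding paths_to_def by auto
  obtain r where r: "s = r @ [(x, t)]" using s(2,5) by (cases s rule: rev_cases) auto
  have "lattice_pt eps (x, t)" using s(1) unfolding checker_path_def r by simp
  then have "lattice_pt eps (x + d, t + eps)" using lattice_pt_step assms(2) by blast
  then have "checker_path eps (s @ [(x + d, t + eps)])"
    using s(1) assms(2) unfolding checker_path_def r
    by (auto simp: nth_append less_Suc_eq)
  then show ?thesis unfolding paths_to_def using s by (auto simp: nth_append hd_append)
qed

lemma paths_to_butlast:
  assumes "s \<in> paths_to eps x t" "3 \<le> length s"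
  shows "butlast s \<in> paths_to eps (fst (last (butlast s))) (t - eps)"
proof -
  have s: "checker_path eps s" "hd s = (0, 0)" "s ! 1 = (eps, eps)" "last s = (x, t)"
    using assms(1) unfolding paths_to_def by auto
  obtain r p where r: "s = r @ [p]" using assms(2) by (cases s rule: rev_cases) auto
  have "r \<noteq> []" using assms(2) r by (cases r) auto
  then have "checker_path eps r" using checker_path_prefix s(1) r by blast
  moreover have "snd (last r) = t - eps"
    using checker_path_last_step[OF s(1)] s(4) assms(2) r by simp
  moreover have "hd r = (0, 0)" "r ! 1 = (eps, eps)"
    using s(2,3) assms(2) r \<open>r \<noteq> []\<close> by (auto simp: nth_append hd_append)
  ultimately show ?thesis
    unfolding paths_to_def using assms(2) r by (auto simp: prod_eq_iff)
qed

definition paths_last_step :: "real \<Rightarrow> real \<Rightarrow> real \<Rightarrow> real \<Rightarrow> (real \<times> real) list set" where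
  "paths_last_step eps d x t = {s \<in> paths_to eps x t. fst (last (butlast s)) = x - d}"

lemma paths_to_eq_Un_last_step:
  assumes "eps > 0" "d \<in> {eps, - eps}"
  shows "paths_to eps x t = paths_last_step eps d x t \<union> paths_last_step eps (- d) x t"
    and "paths_last_step eps d x t \<inter> paths_last_step eps (- d) x t = {}"
proof -
  have "fst (last (butlast s)) \<in> {x - d, x + d}" if "s \<in> paths_to eps x t" for s
    using that assms(2) checker_path_last_step[of eps s] unfolding paths_to_def by auto
  then show "paths_to eps x t = paths_last_step eps d x t \<union> paths_last_step eps (- d) x t"
    unfolding paths_last_step_def by auto
  show "paths_last_step eps d x t \<inter> paths_last_step eps (- d) x t = {}"
    using assms unfolding paths_last_step_def by auto
qed

lemma paths_last_step_snoc:
  assumes "eps > 0" "eps \<le> t" "d \<in> {eps, - eps}"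
  shows "paths_last_step eps d x (t + eps) = (\<lambda>s. s @ [(x, t + eps)]) ` paths_to eps (x - d) t"
proof (intro set_eqI iffI)
  fix s assume "s \<in> paths_last_step eps d x (t + eps)"
  then have s: "s \<in> paths_to eps x (t + eps)" and prev: "fst (last (butlast s)) = x - d"
    unfolding paths_last_step_def by auto
  have "t + eps = real (length s - 1) * eps" using paths_to_length[OF s] .
  with assms(2) have "2 * eps \<le> real (length s - 1) * eps" by linarith
  with assms(1) have "2 \<le> real (length s - 1)" by simp
  then have "3 \<le> length s" by linarith
  then have "butlast s \<in> paths_to eps (x - d) t" using paths_to_butlast[OF s] prev by simp
  moreover have "s = butlast s @ [(x, t + eps)]"
    using s append_butlast_last_id[of s] \<open>3 \<le> length s\<close> unfolding paths_to_def by force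
  ultimately show "s \<in> (\<lambda>s. s @ [(x, t + eps)]) ` paths_to eps (x - d) t" by blast
next
  fix s assume "s \<in> (\<lambda>s. s @ [(x, t + eps)]) ` paths_to eps (x - d) t"
  then obtain r where r: "r \<in> paths_to eps (x - d) t" and "s = r @ [(x, t + eps)]" by blast
  moreover have "last r = (x - d, t)" using r unfolding paths_to_def by simp
  ultimately show "s \<in> paths_last_step eps d x (t + eps)"
    using paths_to_snoc[OF r assms(3)] unfolding paths_last_step_def by simp
qed

lemma turns_snoc:
  assumes "checker_path eps s" "2 \<le> length s" "eps > 0" "d \<in> {eps, - eps}"
  shows "turns (s @ [(fst (last s) + d, snd (last s) + eps)]) =
         turns s + (if fst (last s) - fst (last (butlast s)) = d then 0 else 1)"
proof -
  obtain r q p where s: "s = r @ [q, p]" using length_ge_2_rev_exhaust[OF assms(2)] .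
  have step: "snd p = snd q + eps" "fst p - fst q \<in> {eps, - eps}"
    using checker_path_last_step[OF assms(1,2)] s by (simp_all add: butlast_append)
  let ?s' = "s @ [(fst p + d, snd p + eps)]"
  let ?L = "Suc (length r)"
  have old: "is_turn ?s' i \<longleftrightarrow> is_turn s i" if "i \<noteq> ?L" for i
    using that unfolding is_turn_def s by (auto simp: nth_append)
  have "is_turn ?s' ?L \<longleftrightarrow> d * (fst q - fst p) - eps * eps = 0"
    using step(1) unfolding is_turn_def s by (simp add: nth_append algebra_simps)
  also have "\<dots> \<longleftrightarrow> fst p - fst q \<noteq> d"
    using step(2) assms(3,4) by (auto simp: algebra_simps) (auto simp flip: distrib_left)
  finally have new: "is_turn ?s' ?L \<longleftrightarrow> fst p - fst q \<noteq> d" .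
  have "\<not> is_turn s ?L" unfolding is_turn_def s by simp
  then have "is_turn ?s' i \<longleftrightarrow> is_turn s i \<or> (i = ?L \<and> fst p - fst q \<noteq> d)" for i
    using old new by (cases "i = ?L") auto
  then have "{i. is_turn ?s' i} =
      (if fst p - fst q = d then {i. is_turn s i} else insert ?L {i. is_turn s i})"
    by auto
  moreover have "finite {i. is_turn s i}"
    by (rule finite_subset[of _ "{..<length s}"]) (auto simp: is_turn_def)
  ultimately show ?thesis
    using \<open>\<not> is_turn s ?L\<close> unfolding turns_def s by (simp add: butlast_append)
qed

lemma paths_to_first_row:
  assumes "eps > 0"
  shows "paths_to eps x eps = (if x = eps then {[(0, 0), (eps, eps)]} else {})"
proof -
  have first_row: "[(0, 0), (eps, eps)] \<in> paths_to eps eps eps"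
  proof -
    have "lattice_pt eps (0, 0)" "lattice_pt eps (eps, eps)"
      unfolding lattice_pt_def by (intro exI[of _ 0]; simp) (intro exI[of _ 1]; simp)
    then show ?thesis unfolding paths_to_def checker_path_def by (auto simp: less_Suc_eq)
  qed
  have "s = [(0, 0), (eps, eps)] \<and> x = eps" if s: "s \<in> paths_to eps x eps" for s
  proof -
    have "real (length s - 1) * eps = 1 * eps" using paths_to_length[OF s] by simp
    then have "real (length s - 1) = 1" using assms by (subst (asm) mult_cancel_right) simp
    moreover have "2 \<le> length s" using s unfolding paths_to_def by simp
    ultimately have "length s = 2" by linarith
    then obtain q p where s_eq: "s = [q, p]" by (auto simp: numeral_2_eq_2 length_Suc_conv)
    moreover have "hd s = (0, 0)" "s ! 1 = (eps, eps)" "last s = (x, eps)"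
      using s unfolding paths_to_def by simp_all
    ultimately have "q = (0, 0)" "p = (eps, eps)" "p = (x, eps)" by simp_all
    then show ?thesis using s_eq by simp
  qed
  then have "paths_to eps x eps \<subseteq> (if x = eps then {[(0, 0), (eps, eps)]} else {})"
    by (auto split: if_splits)
  moreover have "x = eps \<Longrightarrow> [(0, 0), (eps, eps)] \<in> paths_to eps x eps"
    using first_row by simp
  ultimately show ?thesis by (auto split: if_splits)
qed

lemma finite_paths_to:
  assumes "eps > 0"
  shows "finite (paths_to eps x (real (Suc n) * eps))"
proof (induction n arbitrary: x)
  case 0
  then show ?case using paths_to_first_row[OF assms] by simp
next
  case (Suc n)
  let ?t = "real (Suc n) * eps"
  have "eps \<le> ?t" using assms by simp
  then have "paths_to eps x (?t + eps) =
      (\<lambda>s. s @ [(x, ?t + eps)]) ` paths_to eps (x - eps) ?t \<union>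
      (\<lambda>s. s @ [(x, ?t + eps)]) ` paths_to eps (x + eps) ?t"
    unfolding paths_to_eq_Un_last_step(1)[OF assms insertI1, of x "?t + eps"]
    by (simp add: paths_last_step_snoc[OF assms])
  moreover have "real (Suc (Suc n)) * eps = ?t + eps" by (simp add: algebra_simps)
  ultimately show ?case using Suc.IH by simp
qed

section \<open>The lattice recursion for the amplitude\<close>

definition turn_sum :: "'a::comm_semiring_1 \<Rightarrow> real \<Rightarrow> real \<Rightarrow> real \<Rightarrow> real \<Rightarrow> 'a" where
  "turn_sum z eps d x t = (\<Sum>s\<in>paths_last_step eps d x t. z ^ turns s)"

lemma sum_paths_to_eq_turn_sum:
  assumes "eps > 0" "d \<in> {eps, - eps}" "finite (paths_to eps x t)"
  shows "(\<Sum>s\<in>paths_to eps x t. z ^ turns s) = turn_sum z eps d x t + turn_sum z eps (- d) x t"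
proof -
  note split = paths_to_eq_Un_last_step[OF assms(1,2), of x t]
  have "finite (paths_last_step eps d x t)" "finite (paths_last_step eps (- d) x t)"
    using assms(3) unfolding split(1) by simp_all
  then show ?thesis unfolding turn_sum_def split(1) using split(2) by (rule sum.union_disjoint)
qed

lemma turn_sum_snoc:
  assumes "eps > 0" "eps \<le> t" "d \<in> {eps, - eps}" "finite (paths_to eps (x - d) t)"
  shows "turn_sum z eps d x (t + eps) = turn_sum z eps d (x - d) t + z * turn_sum z eps (- d) (x - d) t"
proof -
  let ?P = "paths_to eps (x - d) t"
  let ?f = "\<lambda>s. z ^ turns s * (if s \<in> paths_last_step eps d (x - d) t then 1 else z)"
  have "turns (s @ [(x, t + eps)]) = turns s + (if s \<in> paths_last_step eps d (x - d) t then 0 else 1)"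
    if s: "s \<in> ?P" for s
  proof -
    have "checker_path eps s" "2 \<le> length s" "last s = (x - d, t)"
      using s unfolding paths_to_def by auto
    from turns_snoc[OF this(1,2) assms(1,3)] this(3)
    show ?thesis unfolding paths_last_step_def using s by auto
  qed
  then have "turn_sum z eps d x (t + eps) = (\<Sum>s\<in>?P. ?f s)"
    unfolding turn_sum_def paths_last_step_snoc[OF assms(1-3)]
    by (subst sum.reindex) (auto simp: inj_on_def power_add intro!: sum.cong)
  also have "\<dots> = turn_sum z eps d (x - d) t + z * turn_sum z eps (- d) (x - d) t"
    unfolding turn_sum_def sum_distrib_left
    unfolding paths_to_eq_Un_last_step(1)[OF assms(1,3), of "x - d" t]
    using paths_to_eq_Un_last_step[OF assms(1,3), of "x - d" t] assms(4)
    by (subst sum.union_disjoint) (auto simp: mult.commute intro!: arg_cong2[where f = "(+)"] sum.cong)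
  finally show ?thesis .
qed

lemma turn_sum_first_row:
  assumes "eps > 0"
  shows "turn_sum z eps eps x eps = (if x = eps then 1 else 0)"
    and "turn_sum z eps (- eps) x eps = 0"
proof -
  have no_turn: "{i. is_turn [p, q] i} = {}" for p q :: "real \<times> real"
    unfolding is_turn_def by auto
  have "turns [p, q] = 0" for p q :: "real \<times> real"
    unfolding turns_def no_turn by simp
  moreover have "paths_last_step eps eps x eps = (if x = eps then {[(0, 0), (eps, eps)]} else {})"
    "paths_last_step eps (- eps) x eps = {}"
    using assms unfolding paths_last_step_def paths_to_first_row[OF assms] by auto
  ultimately show "turn_sum z eps eps x eps = (if x = eps then 1 else 0)"
    "turn_sum z eps (- eps) x eps = 0"
    unfolding turn_sum_def by simp_all
qed

text \<open>Unnormalised real and imaginary parts of the amplitude on the integer lattice: \<open>amp1 \<mu> n k\<close>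
  belongs to the point \<open>(k\<epsilon>, (n + 1)\<epsilon>)\<close>, and \<open>\<mu>\<close> stands for \<open>m\<epsilon>\<close>.\<close>
fun amp1 :: "real \<Rightarrow> nat \<Rightarrow> int \<Rightarrow> real" and amp2 :: "real \<Rightarrow> nat \<Rightarrow> int \<Rightarrow> real" where
  "amp1 mu 0 k = 0"
| "amp1 mu (Suc n) k = amp1 mu n (k + 1) + mu * amp2 mu n (k + 1)"
| "amp2 mu 0 k = (if k = 1 then 1 else 0)"
| "amp2 mu (Suc n) k = amp2 mu n (k - 1) - mu * amp1 mu n (k - 1)"

lemma turn_sum_eq_amp:
  assumes "eps > 0"
  shows "turn_sum (- \<i> * complex_of_real mu) eps eps (of_int k * eps) (real (Suc n) * eps) = amp2 mu n k \<and>
    turn_sum (- \<i> * complex_of_real mu) eps (- eps) (of_int k * eps) (real (Suc n) * eps) = - \<i> * amp1 mu n k"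
proof (induction n arbitrary: k)
  case 0
  have "eps \<noteq> 0" using assms by simp
  then show ?case by (simp add: turn_sum_first_row[OF assms])
next
  case (Suc n)
  let ?z = "- \<i> * complex_of_real mu" and ?t = "real (Suc n) * eps"
  have t: "real (Suc (Suc n)) * eps = ?t + eps" by (simp add: algebra_simps)
  have le: "eps \<le> ?t" using assms by simp
  have "of_int k * eps - eps = of_int (k - 1) * eps" "of_int k * eps - - eps = of_int (k + 1) * eps"
    by (simp_all add: algebra_simps)
  then have "turn_sum ?z eps eps (of_int k * eps) (?t + eps) =
      turn_sum ?z eps eps (of_int (k - 1) * eps) ?t + ?z * turn_sum ?z eps (- eps) (of_int (k - 1) * eps) ?t"
    "turn_sum ?z eps (- eps) (of_int k * eps) (?t + eps) =
      turn_sum ?z eps (- eps) (of_int (k + 1) * eps) ?t + ?z * turn_sum ?z eps eps (of_int (k + 1) * eps) ?t"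
    using turn_sum_snoc[OF assms le _ finite_paths_to[OF assms], where x = "of_int k * eps" and z = ?z] by simp_all
  then show ?case
    unfolding t Suc.IH[of "k - 1", THEN conjunct1] Suc.IH[of "k - 1", THEN conjunct2]
      Suc.IH[of "k + 1", THEN conjunct1] Suc.IH[of "k + 1", THEN conjunct2]
    by (simp add: algebra_simps)
qed

lemma a_eq_amp:
  assumes "eps > 0"
  shows "a (of_int k * eps) (real (Suc n) * eps) m eps =
    complex_of_real ((1 + m\<^sup>2 * eps\<^sup>2) powr (- real n / 2)) * Complex (amp1 (m * eps) n k) (amp2 (m * eps) n k)"
proof -
  let ?z = "- \<i> * complex_of_real (m * eps)"
  have paths: "(\<Sum>s\<in>paths_to eps (of_int k * eps) (real (Suc n) * eps). ?z ^ turns s)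
      = amp2 (m * eps) n k - \<i> * amp1 (m * eps) n k"
    unfolding sum_paths_to_eq_turn_sum[OF assms insertI1 finite_paths_to[OF assms]]
      turn_sum_eq_amp[OF assms, THEN conjunct1] turn_sum_eq_amp[OF assms, THEN conjunct2] by simp
  have exponent: "(1 - real (Suc n) * eps / eps) / 2 = - real n / 2" using assms by simp
  show ?thesis unfolding a_def paths exponent by (simp add: Complex_eq algebra_simps)
qed

lemma amp1_Suc_Suc:
  "amp1 mu (Suc (Suc n)) k = amp1 mu (Suc n) (k + 1) + amp1 mu (Suc n) (k - 1) - (1 + mu\<^sup>2) * amp1 mu n k"
  by (simp add: algebra_simps power2_eq_square)

lemma amp1_eq_0: "int n < \<bar>k\<bar> \<Longrightarrow> amp1 mu n k = 0"
proof (induction n arbitrary: k rule: induct_nat_012)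
  case (ge2 n)
  then show ?case unfolding amp1_Suc_Suc by (simp del: amp1.simps)
qed simp_all

lemma amp1_minus: "amp1 mu n (- k) = amp1 mu n k"
proof (induction n arbitrary: k rule: induct_nat_012)
  case (ge2 n)
  have "- k + 1 = - (k - 1)" "- k - 1 = - (k + 1)" by simp_all
  then show ?case
    unfolding amp1_Suc_Suc using ge2.IH(1)[of k] ge2.IH(2)[of "k - 1"] ge2.IH(2)[of "k + 1"]
    by (simp del: amp1.simps)
qed simp_all

lemma amp1_massless: "amp1 0 n k = 0"
  by (induction n arbitrary: k) simp_all

section \<open>The cosine transform of \<open>amp1\<close>\<close>

text \<open>For \<open>r = \<rho>\<^sup>2\<close> this is \<open>\<rho>\<^sup>n\<^sup>-\<^sup>1 U\<^sub>n\<^sub>-\<^sub>1(c / \<rho>)\<close>, with \<open>U\<close> the Chebyshev polynomials of the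
  second kind.\<close>
fun scaled_chebyshev :: "real \<Rightarrow> real \<Rightarrow> nat \<Rightarrow> real" where
  "scaled_chebyshev r c 0 = 0"
| "scaled_chebyshev r c (Suc 0) = 1"
| "scaled_chebyshev r c (Suc (Suc n)) = 2 * c * scaled_chebyshev r c (Suc n) - r * scaled_chebyshev r c n"

lemma scaled_chebyshev_cos:
  assumes "c = rho * cos w"
  shows "rho * scaled_chebyshev (rho\<^sup>2) c n * sin w = rho ^ n * sin (real n * w)"
proof (induction n rule: induct_nat_012)
  case (ge2 n)
  let ?U = "scaled_chebyshev (rho\<^sup>2) c"
  have "rho * ?U (Suc (Suc n)) * sin w =
      2 * (rho * cos w) * (rho * ?U (Suc n) * sin w) - rho\<^sup>2 * (rho * ?U n * sin w)"
    using assms by (simp add: algebra_simps)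
  also have "\<dots> = rho ^ Suc (Suc n) * (2 * cos w * sin (real (Suc n) * w) - sin (real n * w))"
    unfolding ge2.IH by (simp add: algebra_simps power2_eq_square)
  also have "2 * cos w * sin (real (Suc n) * w) - sin (real n * w) = sin (real (Suc (Suc n)) * w)"
    using sin_add[of "real (Suc n) * w" w] sin_diff[of "real (Suc n) * w" w]
    by (simp add: algebra_simps)
  finally show ?case .
qed simp_all

lemma sum_shift_int_interval:
  fixes f :: "int \<Rightarrow> 'a::ab_group_add"
  assumes "lo \<le> hi" "f lo = 0" "f (hi + 1) = 0"
  shows "(\<Sum>k\<in>{lo..hi}. f (k + 1)) = (\<Sum>k\<in>{lo..hi}. f k)"
proof -
  have "(\<Sum>k\<in>{lo..hi}. f (k + 1)) = (\<Sum>k\<in>{lo + 1..hi + 1}. f k)"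
    by (rule sum.reindex_bij_witness[of _ "\<lambda>k. k - 1" "\<lambda>k. k + 1"]) auto
  also have "\<dots> = (\<Sum>k\<in>insert lo {lo + 1..hi + 1}. f k)"
    using assms(2) by simp
  also have "insert lo {lo + 1..hi + 1} = insert (hi + 1) {lo..hi}"
    using assms(1) by auto
  also have "(\<Sum>k\<in>insert (hi + 1) {lo..hi}. f k) = (\<Sum>k\<in>{lo..hi}. f k)"
    using assms(3) by simp
  finally show ?thesis .
qed

lemma amp1_cos_sum:
  "int n \<le> M \<Longrightarrow> (\<Sum>k\<in>{-M..M}. amp1 mu n k * cos (of_int k * p)) = mu * scaled_chebyshev (1 + mu\<^sup>2) (cos p) n"
proof (induction n arbitrary: M rule: induct_nat_012)
  case 1
  have "(\<Sum>k\<in>{-M..M}. amp1 mu (Suc 0) k * cos (of_int k * p)) = (\<Sum>k\<in>{-M..M}. if k = 0 then mu else 0)"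
    by (intro sum.cong) auto
  then show ?case using 1 by simp
next
  case (ge2 n)
  let ?a = "amp1 mu (Suc n)"
  have shift_down: "(\<Sum>k\<in>{-M..M}. ?a (k + 1) * cos (of_int k * p)) = (\<Sum>k\<in>{-M..M}. ?a k * cos (of_int (k - 1) * p))"
    using sum_shift_int_interval[of "- M" M "\<lambda>k. ?a k * cos (of_int (k - 1) * p)"] ge2.prems
    by (simp add: amp1_eq_0 del: amp1.simps)
  have shift_up: "(\<Sum>k\<in>{-M..M}. ?a (k - 1) * cos (of_int k * p)) = (\<Sum>k\<in>{-M..M}. ?a k * cos (of_int (k + 1) * p))"
    using sum_shift_int_interval[of "- M" M "\<lambda>k. ?a (k - 1) * cos (of_int k * p)"] ge2.prems
    by (simp add: amp1_eq_0 del: amp1.simps)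
  have "cos (of_int (k - 1) * p) + cos (of_int (k + 1) * p) = 2 * cos p * cos (of_int k * p)" for k
    using cos_add[of "of_int k * p" p] cos_diff[of "of_int k * p" p] by (simp add: algebra_simps)
  then have neighbours: "(\<Sum>k\<in>{-M..M}. ?a (k + 1) * cos (of_int k * p)) + (\<Sum>k\<in>{-M..M}. ?a (k - 1) * cos (of_int k * p))
      = 2 * cos p * (\<Sum>k\<in>{-M..M}. ?a k * cos (of_int k * p))"
    unfolding shift_down shift_up sum.distrib[symmetric] sum_distrib_left
    by (intro sum.cong) (auto simp: algebra_simps simp flip: distrib_left)
  have "(\<Sum>k\<in>{-M..M}. amp1 mu (Suc (Suc n)) k * cos (of_int k * p)) =
      (\<Sum>k\<in>{-M..M}. ?a (k + 1) * cos (of_int k * p)) + (\<Sum>k\<in>{-M..M}. ?a (k - 1) * cos (of_int k * p))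
      - (1 + mu\<^sup>2) * (\<Sum>k\<in>{-M..M}. amp1 mu n k * cos (of_int k * p))"
    unfolding amp1_Suc_Suc
    by (simp add: algebra_simps sum.distrib sum_subtractf sum_distrib_left del: amp1.simps)
  also have "\<dots> = 2 * cos p * (mu * scaled_chebyshev (1 + mu\<^sup>2) (cos p) (Suc n))
      - (1 + mu\<^sup>2) * (mu * scaled_chebyshev (1 + mu\<^sup>2) (cos p) n)"
    unfolding neighbours using ge2.IH ge2.prems by simp
  finally show ?case by (simp add: algebra_simps)
qed simp

section \<open>Integrals over a period\<close>

lemma has_integral_cos_int:
  "((\<lambda>p. cos (of_int j * p)) has_integral (if j = 0 then 2 * pi else 0)) {-pi..pi}"
proof (cases "j = 0")
  case True
  then show ?thesis using has_integral_const_real[of "1::real" "-pi" pi] by simp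
next
  case False
  have "((\<lambda>p. cos (of_int j * p)) has_integral
      sin (of_int j * pi) / of_int j - sin (of_int j * - pi) / of_int j) {-pi..pi}"
  proof (rule fundamental_theorem_of_calculus)
    fix x :: real
    have "((\<lambda>p. sin (of_int j * p) / of_int j) has_real_derivative cos (of_int j * x)) (at x)"
      using False by (auto intro!: derivative_eq_intros)
    then show "((\<lambda>p. sin (of_int j * p) / of_int j) has_vector_derivative cos (of_int j * x)) (at x within {-pi..pi})"
      by (simp add: has_real_derivative_iff_has_vector_derivative has_vector_derivative_at_within)
  qed simp
  moreover have "sin (of_int j * pi) = 0" "sin (of_int j * - pi) = 0"
    using sin_times_pi_eq_0[of "of_int j"] sin_times_pi_eq_0[of "of_int (- j)"] by simp_all
  ultimately show ?thesis using False by simp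
qed

lemma has_integral_cos_int_mult_cos_int:
  "((\<lambda>p. cos (of_int j * p) * cos (of_int k * p)) has_integral
      pi * ((if j = k then 1 else 0) + (if j = - k then 1 else 0))) {-pi..pi}"
proof -
  have "cos (of_int j * p) * cos (of_int k * p) = cos (of_int (j - k) * p) / 2 + cos (of_int (j + k) * p) / 2"
    for p :: real
    by (simp add: cos_times_cos algebra_simps add_divide_distrib)
  moreover have "((\<lambda>p. cos (of_int (j - k) * p) / 2 + cos (of_int (j + k) * p) / 2) has_integral
      (if j - k = 0 then 2 * pi else 0) / 2 + (if j + k = 0 then 2 * pi else 0) / 2) {-pi..pi}"
    by (intro has_integral_add has_integral_divide has_integral_cos_int)
  ultimately show ?thesis by (auto simp: algebra_simps)
qed

lemma parseval_even_cos_sum: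
  fixes c :: "int \<Rightarrow> real"
  assumes even: "\<And>k. c (- k) = c k"
  shows "((\<lambda>p. (\<Sum>k\<in>{-M..M}. c k * cos (of_int k * p))\<^sup>2) has_integral
          2 * pi * (\<Sum>k\<in>{-M..M}. (c k)\<^sup>2)) {-pi..pi}"
proof -
  have square: "(\<Sum>k\<in>{-M..M}. c k * cos (of_int k * p))\<^sup>2 =
      (\<Sum>j\<in>{-M..M}. \<Sum>k\<in>{-M..M}. c j * c k * (cos (of_int j * p) * cos (of_int k * p)))" for p
    by (simp add: power2_eq_square sum_product algebra_simps)
  have "(\<Sum>k\<in>{-M..M}. c j * c k * (pi * ((if j = k then 1 else 0) + (if j = - k then 1 else 0))))
      = 2 * pi * (c j)\<^sup>2" if "j \<in> {-M..M}" for j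
  proof -
    have "(\<Sum>k\<in>{-M..M}. c j * c k * (pi * ((if j = k then 1 else 0) + (if j = - k then 1 else 0))))
        = (\<Sum>k\<in>{-M..M}. if k = j then c j * c k * pi else 0) + (\<Sum>k\<in>{-M..M}. if k = - j then c j * c k * pi else 0)"
      by (subst sum.distrib[symmetric], rule sum.cong) auto
    also have "\<dots> = 2 * pi * (c j)\<^sup>2"
      using that even[of j] by (simp add: power2_eq_square)
    finally show ?thesis .
  qed
  then have "(\<Sum>j\<in>{-M..M}. \<Sum>k\<in>{-M..M}. c j * c k * (pi * ((if j = k then 1 else 0) + (if j = - k then 1 else 0))))
      = 2 * pi * (\<Sum>k\<in>{-M..M}. (c k)\<^sup>2)"
    by (simp add: sum_distrib_left)
  moreover have "((\<lambda>p. \<Sum>j\<in>{-M..M}. \<Sum>k\<in>{-M..M}. c j * c k * (cos (of_int j * p) * cos (of_int k * p))) has_integral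
      (\<Sum>j\<in>{-M..M}. \<Sum>k\<in>{-M..M}. c j * c k * (pi * ((if j = k then 1 else 0) + (if j = - k then 1 else 0))))) {-pi..pi}"
    by (intro has_integral_sum finite_atLeastAtMost_int has_integral_mult_right has_integral_cos_int_mult_cos_int)
  ultimately show ?thesis unfolding square by simp
qed

lemma cos_sq_plus_sin_sq_pos:
  fixes k :: real
  assumes "k > 0"
  shows "(cos p)\<^sup>2 + k * (sin p)\<^sup>2 > 0"
proof (cases "sin p = 0")
  case True
  then show ?thesis using sin_cos_squared_add[of p] by simp
next
  case False
  then show ?thesis using assms by (simp add: add_nonneg_pos)
qed

text \<open>The antiderivative is \<open>arctan (k tan p)\<close>, written as
  \<open>p + arctan ((k - 1) sin p cos p / (cos\<^sup>2 p + k sin\<^sup>2 p))\<close> to make it continuous on all of \<open>\<real>\<close>.\<close>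
lemma has_real_derivative_arctan_tan_branch:
  fixes k :: real
  assumes "k > 0"
  shows "((\<lambda>p. p + arctan ((k - 1) * sin p * cos p / ((cos p)\<^sup>2 + k * (sin p)\<^sup>2))) has_real_derivative
          k / ((cos p)\<^sup>2 + k\<^sup>2 * (sin p)\<^sup>2)) (at p)"
proof -
  define s c where "s = sin p" and "c = cos p"
  define D where "D = c\<^sup>2 + k * s\<^sup>2"
  have sc: "s\<^sup>2 + c\<^sup>2 = 1" unfolding s_def c_def by simp
  have D: "D > 0" unfolding D_def s_def c_def using cos_sq_plus_sin_sq_pos[OF assms] .
  have E: "c\<^sup>2 + k\<^sup>2 * s\<^sup>2 > 0" unfolding s_def c_def using cos_sq_plus_sin_sq_pos[of "k\<^sup>2"] assms by simp
  have N': "((\<lambda>p. (k - 1) * sin p * cos p) has_real_derivative (k - 1) * (c\<^sup>2 - s\<^sup>2)) (at p)"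
    unfolding s_def c_def by (rule DERIV_cong, (rule derivative_eq_intros refl)+) (simp add: algebra_simps power2_eq_square)
  have D': "((\<lambda>p. (cos p)\<^sup>2 + k * (sin p)\<^sup>2) has_real_derivative 2 * (k - 1) * s * c) (at p)"
    unfolding s_def c_def by (rule DERIV_cong, (rule derivative_eq_intros refl)+) (simp add: algebra_simps)
  define num where "num = (k - 1) * (c\<^sup>2 - s\<^sup>2) * D - (k - 1) * s * c * (2 * (k - 1) * s * c)"
  have quot: "((\<lambda>p. (k - 1) * sin p * cos p / ((cos p)\<^sup>2 + k * (sin p)\<^sup>2)) has_real_derivative
      num / (D * D)) (at p)"
    using DERIV_divide[OF N' D'] D unfolding num_def D_def s_def c_def by (simp add: mult.assoc)
  have "D\<^sup>2 + ((k - 1) * s * c)\<^sup>2 = c\<^sup>2 + k\<^sup>2 * s\<^sup>2"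
    unfolding D_def using sc by algebra
  then have "1 + ((k - 1) * s * c / D)\<^sup>2 = (c\<^sup>2 + k\<^sup>2 * s\<^sup>2) / D\<^sup>2"
    using D by (simp add: field_simps power2_eq_square)
  then have "1 + inverse (1 + ((k - 1) * s * c / D)\<^sup>2) * (num / (D * D)) = (c\<^sup>2 + k\<^sup>2 * s\<^sup>2 + num) / (c\<^sup>2 + k\<^sup>2 * s\<^sup>2)"
    using D E by (simp add: field_simps power2_eq_square)
  also have "c\<^sup>2 + k\<^sup>2 * s\<^sup>2 + num = k"
    unfolding num_def D_def using sc by algebra
  finally have "1 + inverse (1 + ((k - 1) * s * c / D)\<^sup>2) * (num / (D * D)) = k / (c\<^sup>2 + k\<^sup>2 * s\<^sup>2)" .
  then show ?thesis
    using DERIV_add[OF DERIV_ident DERIV_chain2[OF DERIV_arctan quot]]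
    unfolding s_def c_def D_def by (simp add: divide_inverse mult.assoc)
qed

lemma has_integral_inverse_sin_sq:
  fixes mu :: real
  assumes "mu > 0"
  shows "((\<lambda>p. 1 / (mu\<^sup>2 + (sin p)\<^sup>2)) has_integral 2 * pi / (mu * sqrt (1 + mu\<^sup>2))) {-pi..pi}"
proof -
  define rho where "rho = sqrt (1 + mu\<^sup>2)"
  have rho: "rho > 0" "rho\<^sup>2 = 1 + mu\<^sup>2" unfolding rho_def by (simp_all add: add_pos_nonneg)
  define G where "G = (\<lambda>p. p + arctan ((rho / mu - 1) * sin p * cos p / ((cos p)\<^sup>2 + rho / mu * (sin p)\<^sup>2)))"
  have deriv_eq: "rho / mu / ((cos p)\<^sup>2 + (rho / mu)\<^sup>2 * (sin p)\<^sup>2) = mu * rho * (1 / (mu\<^sup>2 + (sin p)\<^sup>2))" for p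
  proof -
    have "mu\<^sup>2 * (cos p)\<^sup>2 + rho\<^sup>2 * (sin p)\<^sup>2 = mu\<^sup>2 + (sin p)\<^sup>2"
      unfolding rho(2) using sin_cos_squared_add[of p] by algebra
    then have "(cos p)\<^sup>2 + (rho / mu)\<^sup>2 * (sin p)\<^sup>2 = (mu\<^sup>2 + (sin p)\<^sup>2) / mu\<^sup>2"
      using assms by (simp add: field_simps power_divide)
    then show ?thesis using assms rho by (simp add: power2_eq_square)
  qed
  have "((\<lambda>p. mu * rho * (1 / (mu\<^sup>2 + (sin p)\<^sup>2))) has_integral G pi - G (- pi)) {-pi..pi}"
  proof (rule fundamental_theorem_of_calculus)
    fix x :: real
    have "(G has_real_derivative mu * rho * (1 / (mu\<^sup>2 + (sin x)\<^sup>2))) (at x)"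
      using has_real_derivative_arctan_tan_branch[of "rho / mu" x] assms rho
      unfolding G_def deriv_eq by simp
    then show "(G has_vector_derivative mu * rho * (1 / (mu\<^sup>2 + (sin x)\<^sup>2))) (at x within {-pi..pi})"
      by (simp add: has_real_derivative_iff_has_vector_derivative has_vector_derivative_at_within)
  qed simp
  moreover have "G pi - G (- pi) = 2 * pi" unfolding G_def by simp
  ultimately have "((\<lambda>p. 1 / (mu * rho) * (mu * rho * (1 / (mu\<^sup>2 + (sin p)\<^sup>2)))) has_integral
      1 / (mu * rho) * (2 * pi)) {-pi..pi}"
    by (intro has_integral_mult_right) simp
  then show ?thesis using assms rho unfolding rho_def[symmetric] by simp
qed

section \<open>Decay of the oscillating part\<close>

text \<open>Integration by parts, the integrand being \<open>(sin (l w))' q / l\<close>.\<close>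
lemma oscillatory_integral_le:
  fixes w w' q q' :: "real \<Rightarrow> real"
  assumes "lo \<le> hi" "l > 0"
    and w: "\<And>p. p \<in> {lo..hi} \<Longrightarrow> (w has_real_derivative w' p) (at p)"
    and q: "\<And>p. p \<in> {lo..hi} \<Longrightarrow> (q has_real_derivative q' p) (at p)"
    and cont: "continuous_on {lo..hi} w'" "continuous_on {lo..hi} q'"
    and B: "\<And>p. p \<in> {lo..hi} \<Longrightarrow> \<bar>q' p\<bar> \<le> B"
  shows "\<bar>integral {lo..hi} (\<lambda>p. cos (l * w p) * (w' p * q p))\<bar> \<le> (\<bar>q hi\<bar> + \<bar>q lo\<bar> + B * (hi - lo)) / l"
proof -
  define f where "f p = cos (l * w p) * (w' p * q p)" for p
  define g where "g p = sin (l * w p) * q' p" for p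
  define \<Phi> where "\<Phi> p = sin (l * w p) * q p" for p
  have ftc: "((\<lambda>p. l * f p + g p) has_integral \<Phi> hi - \<Phi> lo) {lo..hi}"
  proof (rule fundamental_theorem_of_calculus[OF assms(1)])
    fix p assume "p \<in> {lo..hi}"
    then have "(\<Phi> has_real_derivative l * f p + g p) (at p)"
      unfolding \<Phi>_def f_def g_def
      by (auto intro!: derivative_eq_intros w q simp: algebra_simps)
    then show "(\<Phi> has_vector_derivative l * f p + g p) (at p within {lo..hi})"
      by (simp add: has_real_derivative_iff_has_vector_derivative has_vector_derivative_at_within)
  qed
  have "continuous_on {lo..hi} w" "continuous_on {lo..hi} q"
    using w q DERIV_isCont continuous_at_imp_continuous_on by blast+
  then have cont_fg: "continuous_on {lo..hi} f" "continuous_on {lo..hi} g"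
    unfolding f_def g_def using cont by (auto intro!: continuous_intros)
  then have "((\<lambda>p. l * f p + g p) has_integral l * integral {lo..hi} f + integral {lo..hi} g) {lo..hi}"
    by (intro has_integral_add has_integral_mult_right integrable_integral integrable_continuous_interval)
  from has_integral_unique[OF this ftc]
  have parts: "l * integral {lo..hi} f = \<Phi> hi - \<Phi> lo - integral {lo..hi} g"
    by simp
  have "\<bar>g p\<bar> \<le> B" if "p \<in> {lo..hi}" for p
  proof -
    have "\<bar>sin (l * w p)\<bar> * \<bar>q' p\<bar> \<le> 1 * B"
      using B[OF that] by (intro mult_mono) auto
    then show ?thesis unfolding g_def abs_mult by simp
  qed
  then have "\<bar>integral {lo..hi} g\<bar> \<le> B * (hi - lo)"
    using integral_bound[OF assms(1) cont_fg(2), of B] by (simp add: mult.commute)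
  moreover have "\<bar>\<Phi> p\<bar> \<le> \<bar>q p\<bar>" for p
    unfolding \<Phi>_def abs_mult by (simp add: mult_left_le_one_le)
  moreover have "l * \<bar>integral {lo..hi} f\<bar> = \<bar>\<Phi> hi - \<Phi> lo - integral {lo..hi} g\<bar>"
    using assms(2) unfolding parts[symmetric] by (simp add: abs_mult)
  ultimately have "l * \<bar>integral {lo..hi} f\<bar> \<le> \<bar>q hi\<bar> + \<bar>q lo\<bar> + B * (hi - lo)"
    using abs_triangle_ineq4[of "\<Phi> hi - \<Phi> lo" "integral {lo..hi} g"] abs_triangle_ineq4[of "\<Phi> hi" "\<Phi> lo"]
    by (smt (verit))
  then show ?thesis unfolding f_def using assms(2) by (simp add: field_simps)
qed

lemma oscillatory_integral_bound:
  fixes w w' q q' :: "real \<Rightarrow> real"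
  assumes "lo \<le> hi"
    and w: "\<And>p. p \<in> {lo..hi} \<Longrightarrow> (w has_real_derivative w' p) (at p)"
    and q: "\<And>p. p \<in> {lo..hi} \<Longrightarrow> (q has_real_derivative q' p) (at p)"
    and cont: "continuous_on {lo..hi} w'" "continuous_on {lo..hi} q'"
  obtains C where "\<And>l. l > 0 \<Longrightarrow> \<bar>integral {lo..hi} (\<lambda>p. cos (l * w p) * (w' p * q p))\<bar> \<le> C / l"
proof -
  obtain B where B: "\<And>p. p \<in> {lo..hi} \<Longrightarrow> \<bar>q' p\<bar> \<le> B"
    using compact_imp_bounded[OF compact_continuous_image[OF cont(2) compact_Icc]]
    unfolding bounded_iff by fastforce
  have "\<bar>integral {lo..hi} (\<lambda>p. cos (l * w p) * (w' p * q p))\<bar> \<le> (\<bar>q hi\<bar> + \<bar>q lo\<bar> + B * (hi - lo)) / l"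
    if "l > 0" for l
    by (rule oscillatory_integral_le[OF assms(1) that w q cont B])
  then show thesis by (rule that)
qed

lemma tendsto_zero_by_approximation:
  fixes f :: "nat \<Rightarrow> real"
  assumes "\<And>e. e > 0 \<Longrightarrow> \<exists>g. g \<longlonglongrightarrow> 0 \<and> (\<forall>\<^sub>F n in sequentially. \<bar>f n\<bar> \<le> e + \<bar>g n\<bar>)"
  shows "f \<longlonglongrightarrow> 0"
proof (rule LIMSEQ_I)
  fix r :: real assume "r > 0"
  then obtain g where g: "g \<longlonglongrightarrow> 0" "\<forall>\<^sub>F n in sequentially. \<bar>f n\<bar> \<le> r / 2 + \<bar>g n\<bar>"
    using assms[of "r / 2"] by auto
  moreover have "\<forall>\<^sub>F n in sequentially. \<bar>g n\<bar> < r / 2"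
    using order_tendstoD(2)[OF tendsto_rabs_zero[OF g(1)], of "r / 2"] \<open>r > 0\<close> by simp
  ultimately have "\<forall>\<^sub>F n in sequentially. norm (f n - 0) < r"
    by (auto elim: eventually_elim2)
  then show "\<exists>N. \<forall>n\<ge>N. norm (f n - 0) < r" unfolding eventually_sequentially .
qed

lemma scaled_cos_bounds:
  fixes c0 :: real
  assumes "0 < c0" "c0 < 1"
  shows "\<bar>c0 * cos p\<bar> < 1" "(c0 * cos p)\<^sup>2 \<le> c0\<^sup>2" "0 < 1 - (c0 * cos p)\<^sup>2"
proof -
  have "\<bar>c0 * cos p\<bar> \<le> c0" using assms abs_cos_le_one[of p] by (simp add: abs_mult mult_left_le)
  then show "\<bar>c0 * cos p\<bar> < 1" "(c0 * cos p)\<^sup>2 \<le> c0\<^sup>2"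
    using assms by (simp_all add: abs_le_square_iff[symmetric])
  then show "0 < 1 - (c0 * cos p)\<^sup>2" by (simp add: abs_square_less_1)
qed

text \<open>With \<open>cos w = c0 cos p\<close> this is \<open>cos (l w) / sin\<^sup>2 w\<close>.\<close>
definition oscillating_kernel :: "real \<Rightarrow> real \<Rightarrow> real \<Rightarrow> real" where
  "oscillating_kernel c0 l p = cos (l * arccos (c0 * cos p)) / (1 - (c0 * cos p)\<^sup>2)"

lemma continuous_on_oscillating_kernel:
  assumes "0 < c0" "c0 < 1"
  shows "continuous_on S (oscillating_kernel c0 l)"
proof -
  have "-1 \<le> c0 * cos p" "c0 * cos p \<le> 1" "(c0 * cos p)\<^sup>2 \<noteq> 1" for p
    using scaled_cos_bounds[OF assms, of p] by (auto simp: abs_less_iff)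
  then show ?thesis
    unfolding oscillating_kernel_def[abs_def] by (auto intro!: continuous_intros continuous_on_arccos)
qed

lemma integral_oscillating_kernel_le:
  assumes "0 < c0" "c0 < 1" "lo \<le> hi"
  shows "\<bar>integral {lo..hi} (oscillating_kernel c0 l)\<bar> \<le> (hi - lo) / (1 - c0\<^sup>2)"
proof -
  note bounds = scaled_cos_bounds[OF assms(1,2)]
  have c0_sq: "c0\<^sup>2 < 1" using assms by (simp add: abs_square_less_1)
  have "\<bar>oscillating_kernel c0 l p\<bar> \<le> 1 / (1 - c0\<^sup>2)" for p
  proof -
    have "\<bar>oscillating_kernel c0 l p\<bar> \<le> 1 / (1 - (c0 * cos p)\<^sup>2)"
      unfolding oscillating_kernel_def abs_divide abs_of_pos[OF bounds(3)[of p]]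
      using bounds(3)[of p] by (intro divide_right_mono) auto
    also have "\<dots> \<le> 1 / (1 - c0\<^sup>2)"
      using bounds(2,3)[of p] c0_sq by (intro divide_left_mono) auto
    finally show ?thesis .
  qed
  then show ?thesis
    using integral_bound[OF assms(3) continuous_on_oscillating_kernel[OF assms(1,2)], where B = "1 / (1 - c0\<^sup>2)"]
    by simp
qed

text \<open>Away from the zeros of \<open>sin p\<close> the phase \<open>w = arccos (c0 cos p)\<close> has non-vanishing
  derivative \<open>w'\<close>, and the amplitude \<open>q\<close> below is chosen so that \<open>w' q = 1 / (1 - (c0 cos p)\<^sup>2)\<close>.\<close>
lemma integral_oscillating_kernel_decay:
  assumes c0: "0 < c0" "c0 < 1" and "lo \<le> hi" and sin: "\<And>p. p \<in> {lo..hi} \<Longrightarrow> sin p \<noteq> 0"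
  obtains C where "\<And>l. l > 0 \<Longrightarrow> \<bar>integral {lo..hi} (oscillating_kernel c0 l)\<bar> \<le> C / l"
proof -
  note bounds = scaled_cos_bounds[OF c0]
  define W where "W p = sqrt (1 - (c0 * cos p)\<^sup>2)" for p
  define w' where "w' p = c0 * sin p / W p" for p
  define q where "q p = 1 / (c0 * sin p * W p)" for p
  define q' where
    "q' p = - (c0 * cos p * W p + c0 * sin p * (c0\<^sup>2 * sin p * cos p / W p)) / (c0 * sin p * W p)\<^sup>2" for p
  have W: "W p > 0" "(W p)\<^sup>2 = 1 - (c0 * cos p)\<^sup>2" for p
    unfolding W_def using bounds(3)[of p] by simp_all
  have dW: "(W has_real_derivative c0\<^sup>2 * sin p * cos p / W p) (at p)" for p
    unfolding W_def using bounds(3)[of p]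
    by (auto intro!: derivative_eq_intros simp: field_simps power2_eq_square)
  have dw: "((\<lambda>p. arccos (c0 * cos p)) has_real_derivative w' p) (at p)" for p
    unfolding w'_def W_def using bounds(1)[of p]
    by (auto intro!: derivative_eq_intros DERIV_arccos[THEN DERIV_chain2] simp: field_simps abs_less_iff)
  have dq: "(q has_real_derivative q' p) (at p)" if "p \<in> {lo..hi}" for p
    unfolding q_def q'_def using sin[OF that] W(1)[of p] c0
    by (auto intro!: derivative_eq_intros dW simp: field_simps power2_eq_square)
  have "continuous_on {lo..hi} W" "W p \<noteq> 0" for p
    unfolding W_def using bounds(3)[of p] by (auto intro!: continuous_intros)
  then have cont: "continuous_on {lo..hi} w'" "continuous_on {lo..hi} q'"
    unfolding w'_def q'_def using sin c0 by (auto intro!: continuous_intros)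
  obtain C where C: "\<And>l. l > 0 \<Longrightarrow>
      \<bar>integral {lo..hi} (\<lambda>p. cos (l * arccos (c0 * cos p)) * (w' p * q p))\<bar> \<le> C / l"
    using oscillatory_integral_bound[of lo hi "\<lambda>p. arccos (c0 * cos p)" w' q q'] assms(3) dw dq cont
    by blast
  have "w' p * q p = 1 / (1 - (c0 * cos p)\<^sup>2)" if "p \<in> {lo..hi}" for p
    unfolding w'_def q_def W(2)[symmetric] using sin[OF that] W(1)[of p] c0
    by (simp add: field_simps power2_eq_square)
  then have "integral {lo..hi} (oscillating_kernel c0 l) =
      integral {lo..hi} (\<lambda>p. cos (l * arccos (c0 * cos p)) * (w' p * q p))" for l
    unfolding oscillating_kernel_def by (intro integral_cong) simp
  with C show thesis by (intro that) simp
qed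

lemma integral_oscillating_kernel_bound:
  assumes c0: "0 < c0" "c0 < 1" and d: "0 < d" "d \<le> 1"
  obtains C where
    "\<And>l. l > 0 \<Longrightarrow> \<bar>integral {-pi..pi} (oscillating_kernel c0 l)\<bar> \<le> 4 * d / (1 - c0\<^sup>2) + C / l"
proof -
  have "1 < pi / 2" using pi_gt3 by simp
  then have order: "-pi \<le> -pi + d" "-pi + d \<le> -d" "-d \<le> d" "d \<le> pi - d" "pi - d \<le> pi"
    using d by auto
  let ?I = "\<lambda>lo hi l. integral {lo..hi} (oscillating_kernel c0 l)"
  have combine: "?I lo hi l = ?I lo mid l + ?I mid hi l" if "lo \<le> mid" "mid \<le> hi" for lo mid hi l
    using Henstock_Kurzweil_Integration.integral_combine[OF that
        integrable_continuous_interval[OF continuous_on_oscillating_kernel[OF c0]]]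
    by simp
  have "sin p \<noteq> 0" if "p \<in> {-pi + d..-d} \<union> {d..pi - d}" for p
    using that d sin_gt_zero[of p] sin_gt_zero[of "- p"] by auto
  then obtain C1 C2 where
    C1: "\<And>l. l > 0 \<Longrightarrow> \<bar>?I (-pi + d) (-d) l\<bar> \<le> C1 / l" and
    C2: "\<And>l. l > 0 \<Longrightarrow> \<bar>?I d (pi - d) l\<bar> \<le> C2 / l"
    using integral_oscillating_kernel_decay[OF c0 order(2)] integral_oscillating_kernel_decay[OF c0 order(4)]
    by (metis UnI1 UnI2)
  have "\<bar>?I (-pi) pi l\<bar> \<le> 4 * d / (1 - c0\<^sup>2) + (\<bar>C1\<bar> + \<bar>C2\<bar>) / l" if "l > 0" for l
  proof -
    have "?I (-pi) pi l = ?I (-pi) (-pi + d) l + ?I (-pi + d) (-d) l + ?I (-d) d l + ?I d (pi - d) l + ?I (pi - d) pi l"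
      using combine[OF order(1), of pi] combine[OF order(2), of pi] combine[OF order(3), of pi]
        combine[OF order(4,5)] order by simp
    moreover have "C1 / l + C2 / l \<le> (\<bar>C1\<bar> + \<bar>C2\<bar>) / l"
      unfolding add_divide_distrib[symmetric] using that by (intro divide_right_mono) auto
    moreover have "(- pi + d - - pi) / (1 - c0\<^sup>2) + (d - - d) / (1 - c0\<^sup>2) + (pi - (pi - d)) / (1 - c0\<^sup>2)
        = 4 * d / (1 - c0\<^sup>2)"
      by (simp add: field_simps)
    ultimately show ?thesis
      using integral_oscillating_kernel_le[OF c0 order(1), where l = l]
        integral_oscillating_kernel_le[OF c0 order(3), where l = l]
        integral_oscillating_kernel_le[OF c0 order(5), where l = l] C1[OF that] C2[OF that]
      unfolding abs_le_iff by linarith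
  qed
  then show thesis by (rule that)
qed

lemma integral_oscillating_kernel_tendsto_0:
  assumes c0: "0 < c0" "c0 < 1"
  shows "(\<lambda>n. integral {-pi..pi} (oscillating_kernel c0 (2 * real n))) \<longlonglongrightarrow> 0"
proof (rule tendsto_zero_by_approximation)
  fix e :: real assume "e > 0"
  have c0_sq: "c0\<^sup>2 < 1" using c0 by (simp add: abs_square_less_1)
  define d where "d = min 1 (e * (1 - c0\<^sup>2) / 4)"
  have "0 < d" "d \<le> 1" "d \<le> e * (1 - c0\<^sup>2) / 4"
    unfolding d_def using \<open>e > 0\<close> c0_sq by auto
  moreover from this(3) have small: "4 * d / (1 - c0\<^sup>2) \<le> e"
    using c0_sq by (simp add: field_simps)
  ultimately obtain C where C: "\<And>l. l > 0 \<Longrightarrow>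
      \<bar>integral {-pi..pi} (oscillating_kernel c0 l)\<bar> \<le> 4 * d / (1 - c0\<^sup>2) + C / l"
    using integral_oscillating_kernel_bound[OF c0] by blast
  have "\<bar>integral {-pi..pi} (oscillating_kernel c0 (2 * real n))\<bar> \<le> e + \<bar>C / 2 / real n\<bar>"
    if "n \<ge> 1" for n
  proof -
    have "C / (2 * real n) \<le> \<bar>C / 2 / real n\<bar>"
      unfolding divide_divide_eq_left by (rule abs_ge_self)
    then show ?thesis using C[of "2 * real n"] that small by simp
  qed
  then show "\<exists>g. g \<longlonglongrightarrow> 0 \<and>
      (\<forall>\<^sub>F n in sequentially. \<bar>integral {-pi..pi} (oscillating_kernel c0 (2 * real n))\<bar> \<le> e + \<bar>g n\<bar>)"
    using lim_const_over_n[of "C / 2"] unfolding eventually_sequentially by blast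
qed

lemma inverse_sqrt_one_plus_sq_bounds:
  fixes mu :: real
  assumes "mu > 0"
  shows "0 < 1 / sqrt (1 + mu\<^sup>2)" "1 / sqrt (1 + mu\<^sup>2) < 1"
proof -
  have "1 < sqrt (1 + mu\<^sup>2)" using assms by (simp add: real_less_rsqrt)
  then show "0 < 1 / sqrt (1 + mu\<^sup>2)" "1 / sqrt (1 + mu\<^sup>2) < 1"
    by (simp_all add: divide_less_eq add_pos_nonneg)
qed

lemma scaled_chebyshev_sq_eq:
  fixes mu p :: real
  assumes "mu > 0"
  defines "c0 \<equiv> 1 / sqrt (1 + mu\<^sup>2)"
  shows "(mu * scaled_chebyshev (1 + mu\<^sup>2) (cos p) n)\<^sup>2 / (1 + mu\<^sup>2) ^ n =
    mu\<^sup>2 / 2 * (1 / (mu\<^sup>2 + (sin p)\<^sup>2))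
    - mu\<^sup>2 / (2 * (1 + mu\<^sup>2)) * oscillating_kernel c0 (2 * real n) p"
proof -
  define rho where "rho = sqrt (1 + mu\<^sup>2)"
  define w where "w = arccos (c0 * cos p)"
  define U where "U = scaled_chebyshev (1 + mu\<^sup>2) (cos p) n"
  define A where "A = mu\<^sup>2 + (sin p)\<^sup>2"
  have rho: "rho > 1" "rho\<^sup>2 = 1 + mu\<^sup>2" unfolding rho_def using assms(1) by (simp_all add: real_less_rsqrt)
  have c0: "0 < c0" "c0 < 1" "c0 * rho = 1" unfolding c0_def rho_def[symmetric] using rho by auto
  note bounds = scaled_cos_bounds[OF c0(1,2), of p]
  have cos_w: "cos w = c0 * cos p" unfolding w_def using bounds(1) by (simp add: abs_le_iff)
  have sin_w: "(sin w)\<^sup>2 = 1 - (c0 * cos p)\<^sup>2" unfolding w_def using bounds(1,3)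
    by (simp add: sin_arccos abs_le_iff)
  have "A > 0" unfolding A_def using assms(1) by (simp add: add_pos_nonneg)
  moreover have "(1 + mu\<^sup>2) * (1 - (c0 * cos p)\<^sup>2) = A"
    unfolding A_def using c0(3) rho(2) sin_cos_squared_add[of p] by algebra
  ultimately have A: "A > 0" "(1 + mu\<^sup>2) * (1 - (c0 * cos p)\<^sup>2) = A" .
  define P where "P = (1 + mu\<^sup>2) ^ n"
  define S where "S = (sin (real n * w))\<^sup>2"
  define D where "D = 1 - (c0 * cos p)\<^sup>2"
  have "cos p = rho * cos w" unfolding cos_w using c0(3) by (simp add: algebra_simps)
  from scaled_chebyshev_cos[OF this, of n]
  have "(rho * U * sin w)\<^sup>2 = ((rho\<^sup>2) ^ n * (sin (real n * w))\<^sup>2)"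
    unfolding U_def rho(2)[symmetric] by (simp add: power_mult_distrib power_mult[symmetric] mult.commute)
  then have "U\<^sup>2 * A = P * S"
    unfolding P_def S_def A(2)[symmetric] sin_w[symmetric] rho(2)[symmetric] by (simp add: power_mult_distrib mult_ac)
  moreover have "P > 0" unfolding P_def by (simp add: add_pos_nonneg)
  ultimately have "(mu * U)\<^sup>2 / P = mu\<^sup>2 / 2 * (1 / A) - mu\<^sup>2 / 2 * ((1 - 2 * S) / A)"
    using A(1) by (simp add: field_simps power_mult_distrib)
  also have "mu\<^sup>2 / 2 * ((1 - 2 * S) / A) = mu\<^sup>2 / (2 * (1 + mu\<^sup>2)) * ((1 - 2 * S) / D)"
    unfolding A(2)[symmetric] D_def using bounds(3) by (simp add: field_simps add_pos_nonneg)
  also have "1 - 2 * S = cos (2 * real n * w)"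
    unfolding S_def using cos_double_sin[of "real n * w"] by (simp add: mult.assoc)
  finally show ?thesis unfolding U_def P_def D_def w_def A_def oscillating_kernel_def mult.assoc .
qed

lemma amp1_sq_sum_eq:
  fixes mu :: real
  assumes "mu > 0"
  defines "c0 \<equiv> 1 / sqrt (1 + mu\<^sup>2)"
  shows "(\<Sum>k\<in>{-int n..int n}. (amp1 mu n k)\<^sup>2) / (1 + mu\<^sup>2) ^ n =
    mu / (2 * sqrt (1 + mu\<^sup>2)) - mu\<^sup>2 / (4 * pi * (1 + mu\<^sup>2)) * integral {-pi..pi} (oscillating_kernel c0 (2 * real n))"
proof -
  define I where "I = integral {-pi..pi} (oscillating_kernel c0 (2 * real n))"
  define SS where "SS = (\<Sum>k\<in>{-int n..int n}. (amp1 mu n k)\<^sup>2)"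
  have "0 < c0" "c0 < 1"
    unfolding c0_def using inverse_sqrt_one_plus_sq_bounds[OF assms(1)] .
  then have "(oscillating_kernel c0 (2 * real n) has_integral I) {-pi..pi}"
    unfolding I_def by (intro integrable_integral integrable_continuous_interval continuous_on_oscillating_kernel)
  then have "((\<lambda>p. (mu * scaled_chebyshev (1 + mu\<^sup>2) (cos p) n)\<^sup>2 / (1 + mu\<^sup>2) ^ n) has_integral
      mu\<^sup>2 / 2 * (2 * pi / (mu * sqrt (1 + mu\<^sup>2))) - mu\<^sup>2 / (2 * (1 + mu\<^sup>2)) * I) {-pi..pi}"
    unfolding scaled_chebyshev_sq_eq[OF assms(1)] c0_def[symmetric]
    by (intro has_integral_diff has_integral_mult_right has_integral_inverse_sin_sq assms(1))
  moreover have "((\<lambda>p. (mu * scaled_chebyshev (1 + mu\<^sup>2) (cos p) n)\<^sup>2 / (1 + mu\<^sup>2) ^ n) has_integral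
      2 * pi * SS / (1 + mu\<^sup>2) ^ n) {-pi..pi}"
    using parseval_even_cos_sum[of "amp1 mu n" "int n", OF amp1_minus] has_integral_divide
    unfolding SS_def amp1_cos_sum[OF order_refl] by blast
  ultimately have "2 * pi * SS / (1 + mu\<^sup>2) ^ n =
      mu\<^sup>2 / 2 * (2 * pi / (mu * sqrt (1 + mu\<^sup>2))) - mu\<^sup>2 / (2 * (1 + mu\<^sup>2)) * I"
    by (rule has_integral_unique[rotated])
  then have "SS / (1 + mu\<^sup>2) ^ n =
      (mu\<^sup>2 / 2 * (2 * pi / (mu * sqrt (1 + mu\<^sup>2))) - mu\<^sup>2 / (2 * (1 + mu\<^sup>2)) * I) / (2 * pi)"
    by (simp add: field_simps)
  also have "\<dots> = mu / (2 * sqrt (1 + mu\<^sup>2)) - mu\<^sup>2 / (4 * pi * (1 + mu\<^sup>2)) * I"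
    using assms(1) unfolding diff_divide_distrib by (simp add: power2_eq_square mult_ac)
  finally show ?thesis unfolding SS_def I_def .
qed

lemma amp1_sq_sum_tendsto:
  fixes mu :: real
  assumes "mu \<ge> 0"
  shows "(\<lambda>n. (\<Sum>k\<in>{-int n..int n}. (amp1 mu n k)\<^sup>2) / (1 + mu\<^sup>2) ^ n) \<longlonglongrightarrow> mu / (2 * sqrt (1 + mu\<^sup>2))"
proof (cases "mu = 0")
  case True
  then show ?thesis by (simp add: amp1_massless)
next
  case False
  with assms have "mu > 0" by simp
  define c0 where "c0 = 1 / sqrt (1 + mu\<^sup>2)"
  have "0 < c0" "c0 < 1"
    unfolding c0_def using inverse_sqrt_one_plus_sq_bounds[OF \<open>mu > 0\<close>] .
  define I where "I n = integral {-pi..pi} (oscillating_kernel c0 (2 * real n))" for n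
  have "I \<longlonglongrightarrow> 0"
    unfolding I_def using integral_oscillating_kernel_tendsto_0 \<open>0 < c0\<close> \<open>c0 < 1\<close> .
  then have "(\<lambda>n. mu / (2 * sqrt (1 + mu\<^sup>2)) - mu\<^sup>2 / (4 * pi * (1 + mu\<^sup>2)) * I n)
      \<longlonglongrightarrow> mu / (2 * sqrt (1 + mu\<^sup>2)) - mu\<^sup>2 / (4 * pi * (1 + mu\<^sup>2)) * 0"
    by (intro tendsto_intros)
  then show ?thesis
    unfolding amp1_sq_sum_eq[OF \<open>mu > 0\<close>] c0_def[symmetric] I_def by simp
qed

lemma infsum_a1_sq_eq:
  assumes "eps > 0"
  shows "infsum (\<lambda>x. (a1 x (real (Suc n) * eps) m eps)\<^sup>2) {x. \<exists>k::int. x = of_int k * eps} =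
    (\<Sum>k\<in>{-int n..int n}. (amp1 (m * eps) n k)\<^sup>2) / (1 + (m * eps)\<^sup>2) ^ n"
proof -
  have lattice: "{x. \<exists>k::int. x = of_int k * eps} = (\<lambda>k::int. of_int k * eps) ` UNIV" by auto
  have inj: "inj (\<lambda>k::int. of_int k * eps)" using assms by (auto simp: inj_on_def)
  have "(a1 (of_int k * eps) (real (Suc n) * eps) m eps)\<^sup>2 = (amp1 (m * eps) n k)\<^sup>2 / (1 + (m * eps)\<^sup>2) ^ n"
    for k
  proof -
    have "((1 + (m * eps)\<^sup>2) powr (- real n / 2))\<^sup>2 = (1 + (m * eps)\<^sup>2) powr (- real n)"
      by (simp add: power2_eq_square flip: powr_add)
    also have "\<dots> = 1 / (1 + (m * eps)\<^sup>2) ^ n"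
      by (simp add: powr_minus powr_realpow divide_inverse add_pos_nonneg)
    finally have "((1 + (m * eps)\<^sup>2) powr (- real n / 2))\<^sup>2 = 1 / (1 + (m * eps)\<^sup>2) ^ n" .
    then show ?thesis
      unfolding a1_def a_eq_amp[OF assms] by (simp add: power_mult_distrib)
  qed
  then have "infsum (\<lambda>x. (a1 x (real (Suc n) * eps) m eps)\<^sup>2) {x. \<exists>k::int. x = of_int k * eps} =
      infsum (\<lambda>k. (amp1 (m * eps) n k)\<^sup>2 / (1 + (m * eps)\<^sup>2) ^ n) UNIV"
    unfolding lattice infsum_reindex[OF inj] by (simp add: o_def)
  also have "\<dots> = (\<Sum>k\<in>{-int n..int n}. (amp1 (m * eps) n k)\<^sup>2 / (1 + (m * eps)\<^sup>2) ^ n)"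
    by (subst infsum_cong_neutral[where T = "{-int n..int n}"]) (auto simp: amp1_eq_0)
  finally show ?thesis by (simp add: sum_divide_distrib)
qed

theorem theorem2:
  fixes eps m :: real
  assumes "eps > 0" and "m \<ge> 0" and "m * eps \<le> 1"
  shows "(\<lambda>n::nat. infsum (\<lambda>x. (a1 x (real n * eps) m eps)\<^sup>2)
                          {x. \<exists>k::int. x = of_int k * eps})
           \<longlonglongrightarrow> m * eps / (2 * sqrt (1 + m\<^sup>2 * eps\<^sup>2))"
proof -
  have "(\<lambda>n. infsum (\<lambda>x. (a1 x (real (Suc n) * eps) m eps)\<^sup>2) {x. \<exists>k::int. x = of_int k * eps})
      \<longlonglongrightarrow> m * eps / (2 * sqrt (1 + (m * eps)\<^sup>2))"
    unfolding infsum_a1_sq_eq[OF assms(1)]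
    using amp1_sq_sum_tendsto[of "m * eps"] assms(1,2) by simp
  then show ?thesis unfolding power_mult_distrib by (rule LIMSEQ_imp_Suc)
qed

end
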